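(* Let $m=pq$ with $p,q$ distinct primes. For each $n\ge4$ and each $i$ with $1\le i\le n$ there exists an edge-labeling $\alpha$ of the complete graph $K_n$ by ideals of $\mathbb{Z}/m\mathbb{Z}$ such that $\operatorname{rk}[\mathbb{Z}/m\mathbb{Z}]_{(K_n,\alpha)}=i$.
   Context: An edge-labeling assigns to each edge of a graph a nonzero proper ideal of $\mathbb{Z}/m\mathbb{Z}$. A spline on an edge-labeled graph $(G,\alpha)$ with vertices $v_1,\dots,v_n$ is a vector $(f_{v_1},\dots,f_{v_n})\in(\mathbb{Z}/m\mathbb{Z})^n$ with $f_{v_i}-f_{v_j}\in\alpha(v_iv_j)$ for every edge; the splines form a $\mathbb{Z}$-module $[\mathbb{Z}/m\mathbb{Z}]_{(G,\alpha)}$, whose rank $\operatorname{rk}$ is the smallest size of a generating set. *)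

theory Defs
  imports "HOL-Number_Theory.Number_Theory" "HOL-Algebra.Ideal"
begin

text \<open>Z/mZ is modelled by residue_ring m (carrier {0..m-1}).
 Vertices of K_n are 0..n-1; an edge is the two-element set {i,j}.
 An edge-labeling assigns to each edge a nonzero proper ideal of Z/mZ.\<close>

definition edge_labeling :: "int \<Rightarrow> nat \<Rightarrow> (nat set \<Rightarrow> int set) \<Rightarrow> bool" where
  "edge_labeling m n \<alpha> \<longleftrightarrow>
     (\<forall>i<n. \<forall>j<n. i \<noteq> j \<longrightarrow>
        ideal (\<alpha> {i, j}) (residue_ring m) \<and> \<alpha> {i, j} \<noteq> {0} \<and>
        \<alpha> {i, j} \<noteq> carrier (residue_ring m))"

definition zm_vectors :: "int \<Rightarrow> nat \<Rightarrow> (nat \<Rightarrow> int) set" where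
  "zm_vectors m n = {f. (\<forall>k<n. f k \<in> {0..m-1}) \<and> (\<forall>k\<ge>n. f k = 0)}"

definition splines :: "int \<Rightarrow> nat \<Rightarrow> (nat set \<Rightarrow> int set) \<Rightarrow> (nat \<Rightarrow> int) set" where
  "splines m n \<alpha> = {f \<in> zm_vectors m n.
     \<forall>i<n. \<forall>j<n. i \<noteq> j \<longrightarrow> (f i - f j) mod m \<in> \<alpha> {i, j}}"

definition zm_span :: "int \<Rightarrow> nat \<Rightarrow> (nat \<Rightarrow> int) set \<Rightarrow> (nat \<Rightarrow> int) set" where
  "zm_span m n G = {(\<lambda>k. if k < n then (\<Sum>g\<in>G. c g * g k) mod m else 0) | c. True}"

definition spline_rank :: "int \<Rightarrow> nat \<Rightarrow> (nat set \<Rightarrow> int set) \<Rightarrow> nat" where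
  "spline_rank m n \<alpha> = (LEAST r. \<exists>G. finite G \<and> card G = r \<and> G \<subseteq> splines m n \<alpha> \<and>
        zm_span m n G = splines m n \<alpha>)"

end

theory Submission
  imports Defs
begin

text \<open>
  All labels are the ideals generated by p or by q, so a spline is a vector whose coordinates
  agree modulo the label of every edge; by the Chinese remainder theorem two coordinates are
  equal as soon as they are joined both by a path of p-edges and by a path of q-edges.

  For i = k + 1 \<ge> 2, label by p the edges inside the block {k, ..., n - 1} and by q all others.
  A spline is then constant on the block and congruent to that constant modulo q elsewhere,
  so the splines are generated by the all-ones vector and the k vectors q e_a (a < k).
  For i = 1, a labeling (possible once n \<ge> 4) whose p-edges and q-edges both connect K_n
  forces every spline to be constant.

  For the lower bounds, reducing the splines modulo p on i suitable coordinates gives all of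
  (Z/p)^i, while a module with r generators has at most p^r such reductions.
\<close>

definition multiples_ideal :: "int \<Rightarrow> int \<Rightarrow> int set" where
  "multiples_ideal m d = {x. 0 \<le> x \<and> x < m \<and> d dvd x}"

definition principal_labeling :: "int \<Rightarrow> (nat set \<Rightarrow> int) \<Rightarrow> nat set \<Rightarrow> int set" where
  "principal_labeling m lab e = multiples_ideal m (lab e)"

definition cong_splines :: "int \<Rightarrow> nat \<Rightarrow> (nat set \<Rightarrow> int) \<Rightarrow> (nat \<Rightarrow> int) set" where
  "cong_splines m n lab =
     {f \<in> zm_vectors m n. \<forall>a<n. \<forall>b<n. a \<noteq> b \<longrightarrow> [f a = f b] (mod lab {a, b})}"

lemma multiples_ideal_eq_cgenideal:
  assumes "d dvd m" and "0 < d" and "d < m"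
  shows "multiples_ideal m d = PIdl\<^bsub>residue_ring m\<^esub> d"
proof -
  interpret residues m "residue_ring m" by unfold_locales (use assms in simp)
  have "x \<in> multiples_ideal m d \<longleftrightarrow> (\<exists>k\<in>{0..m - 1}. x = (k * d) mod m)" for x
  proof
    assume x: "x \<in> multiples_ideal m d"
    then have "d dvd x" by (simp add: multiples_ideal_def)
    then obtain k where k: "x = k * d" by (metis dvdE mult.commute)
    have "0 \<le> k"
      using x k \<open>0 < d\<close> by (auto simp: multiples_ideal_def zero_le_mult_iff)
    moreover have "k \<le> k * d"
      using mult_left_mono[of 1 d k] \<open>0 \<le> k\<close> \<open>0 < d\<close> by simp
    ultimately show "\<exists>k\<in>{0..m - 1}. x = (k * d) mod m"
      using x k by (intro bexI[of _ k]) (auto simp: multiples_ideal_def)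
  next
    assume "\<exists>k\<in>{0..m - 1}. x = (k * d) mod m"
    then show "x \<in> multiples_ideal m d"
      using assms by (auto simp: multiples_ideal_def dvd_mod_iff)
  qed
  then show ?thesis
    unfolding cgenideal_def res_carrier_eq res_mult_eq by blast
qed

lemma ideal_multiples_ideal:
  assumes "d dvd m" and "0 < d" and "d < m"
  shows "ideal (multiples_ideal m d) (residue_ring m)"
proof -
  interpret residues m "residue_ring m" by unfold_locales (use assms in simp)
  show ?thesis
    unfolding multiples_ideal_eq_cgenideal[OF assms]
    by (rule cgenideal_ideal) (use assms in \<open>simp add: res_carrier_eq\<close>)
qed

lemma edge_labeling_principal_labeling:
  assumes "\<And>e. lab e dvd m \<and> 1 < lab e \<and> lab e < m"
  shows "edge_labeling m n (principal_labeling m lab)"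
  unfolding edge_labeling_def principal_labeling_def
proof (intro allI impI conjI)
  fix e :: "nat set"
  have d: "lab e dvd m" "1 < lab e" "lab e < m" using assms by auto
  then show "ideal (multiples_ideal m (lab e)) (residue_ring m)"
    by (intro ideal_multiples_ideal) auto
  have "lab e \<in> multiples_ideal m (lab e)" using d by (simp add: multiples_ideal_def)
  then show "multiples_ideal m (lab e) \<noteq> {0}" using d by auto
  have "1 \<in> carrier (residue_ring m)" and "1 \<notin> multiples_ideal m (lab e)"
    using d by (auto simp: residue_ring_def multiples_ideal_def zdvd1_eq)
  then show "multiples_ideal m (lab e) \<noteq> carrier (residue_ring m)" by blast
qed

lemma splines_principal_labeling:
  assumes "0 < m" and "\<And>e. lab e dvd m"
  shows "splines m n (principal_labeling m lab) = cong_splines m n lab"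
proof -
  have "x mod m \<in> multiples_ideal m (lab e) \<longleftrightarrow> [x = 0] (mod lab e)" for x e
    using assms dvd_mod_iff[OF assms(2)]
    by (simp add: multiples_ideal_def cong_0_iff)
  then show ?thesis
    by (simp add: splines_def cong_splines_def principal_labeling_def cong_diff_iff_cong_0)
qed

lemma cong_splinesD:
  assumes "f \<in> cong_splines m n lab"
  shows "f \<in> zm_vectors m n"
    and "a < n \<Longrightarrow> b < n \<Longrightarrow> a \<noteq> b \<Longrightarrow> [f a = f b] (mod lab {a, b})"
  using assms by (auto simp: cong_splines_def)

lemma zm_vectors_memI:
  assumes "0 < m"
  shows "(\<lambda>k. if k < n then x k mod m else 0) \<in> zm_vectors m n"
  using assms by (simp add: zm_vectors_def)

lemma in_zm_spanI:
  assumes f: "f \<in> zm_vectors m n"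
    and cong: "\<And>k. k < n \<Longrightarrow> [f k = (\<Sum>g\<in>G. c g * g k)] (mod m)"
  shows "f \<in> zm_span m n G"
proof -
  have "f k = (if k < n then (\<Sum>g\<in>G. c g * g k) mod m else 0)" for k
    using f cong[of k] by (auto simp: zm_vectors_def cong_def)
  then show ?thesis unfolding zm_span_def by blast
qed

lemma zm_span_subset_cong_splines:
  assumes "0 < m" and lab: "\<And>e. lab e dvd m" and G: "G \<subseteq> cong_splines m n lab"
  shows "zm_span m n G \<subseteq> cong_splines m n lab"
proof
  fix f assume "f \<in> zm_span m n G"
  then obtain c where f: "f = (\<lambda>k. if k < n then (\<Sum>g\<in>G. c g * g k) mod m else 0)"
    unfolding zm_span_def by auto
  have "[f a = f b] (mod lab {a, b})" if "a < n" "b < n" "a \<noteq> b" for a b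
  proof -
    have "[f a = (\<Sum>g\<in>G. c g * g a)] (mod lab {a, b})"
      using that by (auto simp: f intro: cong_dvd_modulus[OF _ lab])
    also have "[(\<Sum>g\<in>G. c g * g a) = (\<Sum>g\<in>G. c g * g b)] (mod lab {a, b})"
      using G that by (intro cong_sum cong_scalar_left) (auto simp: cong_splines_def)
    also have "[(\<Sum>g\<in>G. c g * g b) = f b] (mod lab {a, b})"
      using that by (auto simp: f intro: cong_sym cong_dvd_modulus[OF _ lab])
    finally show ?thesis .
  qed
  then show "f \<in> cong_splines m n lab"
    using zm_vectors_memI[OF \<open>0 < m\<close>] by (simp add: cong_splines_def f)
qed

definition reduce_on :: "int \<Rightarrow> nat set \<Rightarrow> (nat \<Rightarrow> int) \<Rightarrow> nat \<Rightarrow> int" where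
  "reduce_on p A f = restrict (\<lambda>a. f a mod p) A"

lemma reduce_on_eqI:
  assumes t: "t \<in> A \<rightarrow>\<^sub>E {0..<p}" and cong: "\<And>a. a \<in> A \<Longrightarrow> [f a = t a] (mod p)"
  shows "reduce_on p A f = t"
proof
  fix a
  show "reduce_on p A f a = t a"
  proof (cases "a \<in> A")
    case True
    then have "f a mod p = t a mod p" using cong by (simp add: cong_def)
    also have "\<dots> = t a" using PiE_mem[OF t True] by simp
    finally show ?thesis using True by (simp add: reduce_on_def)
  next
    case False
    then show ?thesis using PiE_arb[OF t False] by (simp add: reduce_on_def)
  qed
qed

lemma reduce_on_zm_span_subset:
  assumes "0 < p" and "p dvd m" and "A \<subseteq> {..<n}"
  shows "reduce_on p A ` zm_span m n G \<subseteq>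
           (\<lambda>h. reduce_on p A (\<lambda>a. \<Sum>g\<in>G. h g * g a)) ` (G \<rightarrow>\<^sub>E {0..<p})"
proof
  fix x assume "x \<in> reduce_on p A ` zm_span m n G"
  then obtain c where x: "x = reduce_on p A (\<lambda>k. if k < n then (\<Sum>g\<in>G. c g * g k) mod m else 0)"
    unfolding zm_span_def by auto
  define h where "h = restrict (\<lambda>g. c g mod p) G"
  have "[(\<Sum>g\<in>G. c g * g a) mod m = (\<Sum>g\<in>G. h g * g a)] (mod p)" for a
  proof -
    have "[(\<Sum>g\<in>G. c g * g a) mod m = (\<Sum>g\<in>G. c g * g a)] (mod p)"
      by (rule cong_dvd_modulus[OF _ \<open>p dvd m\<close>]) (simp add: cong_def)
    also have "[(\<Sum>g\<in>G. c g * g a) = (\<Sum>g\<in>G. h g * g a)] (mod p)"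
      by (intro cong_sum cong_scalar_right) (simp add: h_def cong_def)
    finally show ?thesis .
  qed
  then have "x = reduce_on p A (\<lambda>a. \<Sum>g\<in>G. h g * g a)"
    using \<open>A \<subseteq> {..<n}\<close> by (auto simp: x reduce_on_def cong_def intro!: restrict_ext)
  moreover have "h \<in> G \<rightarrow>\<^sub>E {0..<p}"
    using \<open>0 < p\<close> by (auto simp: h_def)
  ultimately show "x \<in> (\<lambda>h. reduce_on p A (\<lambda>a. \<Sum>g\<in>G. h g * g a)) ` (G \<rightarrow>\<^sub>E {0..<p})"
    by blast
qed

lemma card_reduce_on_zm_span_le:
  assumes "0 < p" and "p dvd m" and "A \<subseteq> {..<n}" and "finite G"
  shows "finite (reduce_on p A ` zm_span m n G)"
    and "card (reduce_on p A ` zm_span m n G) \<le> nat p ^ card G"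
proof -
  let ?combine = "\<lambda>h. reduce_on p A (\<lambda>a. \<Sum>g\<in>G. h g * g a)"
  have sub: "reduce_on p A ` zm_span m n G \<subseteq> ?combine ` (G \<rightarrow>\<^sub>E {0..<p})"
    using assms by (intro reduce_on_zm_span_subset)
  have fin: "finite (?combine ` (G \<rightarrow>\<^sub>E {0..<p}))"
    using \<open>finite G\<close> by (intro finite_imageI finite_PiE) auto
  then show "finite (reduce_on p A ` zm_span m n G)" using sub by (rule finite_subset[rotated])
  have "card (reduce_on p A ` zm_span m n G) \<le> card (?combine ` (G \<rightarrow>\<^sub>E {0..<p}))"
    using fin sub by (rule card_mono)
  also have "\<dots> \<le> card (G \<rightarrow>\<^sub>E {0..<p})"
    using \<open>finite G\<close> by (intro card_image_le finite_PiE) auto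
  also have "\<dots> = nat p ^ card G"
    using \<open>finite G\<close> by (simp add: card_PiE)
  finally show "card (reduce_on p A ` zm_span m n G) \<le> nat p ^ card G" .
qed

lemma spline_rank_eqI:
  assumes G: "finite G" "G \<subseteq> splines m n \<alpha>" "zm_span m n G = splines m n \<alpha>"
    and p: "1 < p" "p dvd m" and A: "A \<subseteq> {..<n}" "card A = card G"
    and onto: "A \<rightarrow>\<^sub>E {0..<p} \<subseteq> reduce_on p A ` splines m n \<alpha>"
  shows "spline_rank m n \<alpha> = card G"
  unfolding spline_rank_def
proof (rule Least_equality)
  show "\<exists>G'. finite G' \<and> card G' = card G \<and> G' \<subseteq> splines m n \<alpha> \<and> zm_span m n G' = splines m n \<alpha>"
    using G by blast
next
  fix r assume "\<exists>G'. finite G' \<and> card G' = r \<and> G' \<subseteq> splines m n \<alpha> \<and> zm_span m n G' = splines m n \<alpha>"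
  then obtain G' where G': "finite G'" "card G' = r" "zm_span m n G' = splines m n \<alpha>" by blast
  have "finite A" using A(1) by (rule finite_subset) simp
  have "nat p ^ card A = card (A \<rightarrow>\<^sub>E {0..<p})"
    using \<open>finite A\<close> by (simp add: card_PiE)
  also have "\<dots> \<le> card (reduce_on p A ` zm_span m n G')"
    using onto card_reduce_on_zm_span_le(1)[of p m A n G'] p A G' by (intro card_mono) auto
  also have "\<dots> \<le> nat p ^ card G'"
    using p A G' by (intro card_reduce_on_zm_span_le(2)) auto
  finally have "card A \<le> card G'"
    by (rule power_le_imp_le_exp[rotated]) (use \<open>1 < p\<close> in simp)
  then show "card G \<le> r" using A(2) G'(2) by simp
qed

definition const_vec :: "nat \<Rightarrow> int \<Rightarrow> nat \<Rightarrow> int" where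
  "const_vec n c = (\<lambda>k. if k < n then c else 0)"

lemma const_vec_in_cong_splines:
  assumes "0 \<le> c" and "c < m"
  shows "const_vec n c \<in> cong_splines m n lab"
  using assms by (simp add: const_vec_def cong_splines_def zm_vectors_def)

definition single_vec :: "nat \<Rightarrow> int \<Rightarrow> nat \<Rightarrow> int" where
  "single_vec a c = (\<lambda>k. if k = a then c else 0)"

lemma inj_on_single_vec: "c \<noteq> 0 \<Longrightarrow> inj_on (\<lambda>a. single_vec a c) A"
  by (rule inj_onI) (metis single_vec_def)

locale two_primes =
  fixes P Q :: int
  assumes prime_P: "prime P" and prime_Q: "prime Q" and P_neq_Q: "P \<noteq> Q"
begin

lemma P_gt_1: "1 < P" and Q_gt_1: "1 < Q"
  using prime_P prime_Q prime_gt_1_int by auto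

lemma P_less_PQ: "P < P * Q" and Q_less_PQ: "Q < P * Q"
  using P_gt_1 Q_gt_1 by simp_all

lemma cong_P_Q_imp_eq:
  assumes "x \<in> {0..<P * Q}" and "y \<in> {0..<P * Q}"
    and "[x = y] (mod P)" and "[x = y] (mod Q)"
  shows "x = y"
proof -
  have "coprime P Q" using prime_P prime_Q P_neq_Q by (simp add: primes_coprime)
  then have "[x = y] (mod P * Q)" using assms by (intro coprime_cong_mult)
  then show ?thesis using assms by (auto intro: cong_less_imp_eq_int)
qed

lemma
  assumes "\<And>e. lab e \<in> {P, Q}"
  shows edge_labeling_principal_labeling_P_Q:
      "edge_labeling (P * Q) n (principal_labeling (P * Q) lab)"
    and splines_principal_labeling_P_Q:
      "splines (P * Q) n (principal_labeling (P * Q) lab) = cong_splines (P * Q) n lab"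
proof -
  have lab: "lab e dvd P * Q \<and> 1 < lab e \<and> lab e < P * Q" for e
    using assms[of e] P_gt_1 Q_gt_1 P_less_PQ Q_less_PQ by auto
  then show "edge_labeling (P * Q) n (principal_labeling (P * Q) lab)"
    by (rule edge_labeling_principal_labeling)
  show "splines (P * Q) n (principal_labeling (P * Q) lab) = cong_splines (P * Q) n lab"
    using lab P_less_PQ P_gt_1 by (intro splines_principal_labeling) auto
qed

definition block_labeling :: "nat \<Rightarrow> nat set \<Rightarrow> int" where
  "block_labeling k e = (if e \<subseteq> {k..} then P else Q)"

lemma block_labeling_P: "k \<le> a \<Longrightarrow> k \<le> b \<Longrightarrow> block_labeling k {a, b} = P"
  and block_labeling_Q: "a < k \<Longrightarrow> block_labeling k {a, b} = Q"
  by (auto simp: block_labeling_def)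

lemma block_spline_cong:
  assumes f: "f \<in> cong_splines (P * Q) n (block_labeling k)" and "a < k" and "k < n"
  shows "[f a = f k] (mod Q)"
  using cong_splinesD(2)[OF f, of a k] block_labeling_Q[of a k k] assms by simp

lemma block_spline_eq:
  assumes f: "f \<in> cong_splines (P * Q) n (block_labeling k)"
    and "0 < k" and "k \<le> a" and "a < n"
  shows "f a = f k"
proof (cases "a = k")
  case False
  have "[f a = f k] (mod P)"
    using cong_splinesD(2)[OF f, of a k] block_labeling_P[of k a k] assms False by simp
  moreover have "[f a = f k] (mod Q)"
  proof -
    have "[f 0 = f a] (mod Q)"
      using cong_splinesD(2)[OF f, of 0 a] block_labeling_Q[of 0 k a] assms by simp
    then have "[f a = f 0] (mod Q)" by (rule cong_sym)
    also have "[f 0 = f k] (mod Q)"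
      using block_spline_cong[OF f] assms by simp
    finally show ?thesis .
  qed
  moreover have "f a \<in> {0..<P * Q}" and "f k \<in> {0..<P * Q}"
    using cong_splinesD(1)[OF f] assms by (auto simp: zm_vectors_def)
  ultimately show ?thesis using cong_P_Q_imp_eq by blast
qed simp

definition block_generators :: "nat \<Rightarrow> nat \<Rightarrow> (nat \<Rightarrow> int) set" where
  "block_generators n k = insert (const_vec n 1) ((\<lambda>a. single_vec a Q) ` {..<k})"

lemma const_vec_notin_single_vecs:
  assumes "k < n"
  shows "const_vec n 1 \<notin> (\<lambda>a. single_vec a Q) ` {..<k}"
proof
  assume "const_vec n 1 \<in> (\<lambda>a. single_vec a Q) ` {..<k}"
  then obtain a where "a < k" and "const_vec n 1 k = single_vec a Q k" by auto
  with assms show False by (simp add: const_vec_def single_vec_def)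
qed

lemma card_block_generators:
  assumes "k < n"
  shows "card (block_generators n k) = Suc k"
  using const_vec_notin_single_vecs[OF assms] inj_on_single_vec[of Q "{..<k}"] Q_gt_1
  by (simp add: block_generators_def card_image)

lemma block_generators_subset:
  assumes "k < n"
  shows "block_generators n k \<subseteq> cong_splines (P * Q) n (block_labeling k)"
proof -
  have "single_vec a Q \<in> cong_splines (P * Q) n (block_labeling k)" if "a < k" for a
    using that assms Q_gt_1 Q_less_PQ
    by (auto simp: cong_splines_def zm_vectors_def single_vec_def block_labeling_def cong_def)
  then show ?thesis
    using const_vec_in_cong_splines[of 1 "P * Q"] P_gt_1 P_less_PQ
    by (auto simp: block_generators_def)
qed

lemma sum_block_generators:
  assumes "k < n" and "j < n"
  shows "(\<Sum>g\<in>block_generators n k. c g * g j) =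
           c (const_vec n 1) + (if j < k then c (single_vec j Q) * Q else 0)"
proof -
  have inj: "inj_on (\<lambda>a. single_vec a Q) {..<k}" using inj_on_single_vec Q_gt_1 by simp
  have "(\<Sum>g\<in>block_generators n k. c g * g j) =
          c (const_vec n 1) * const_vec n 1 j + (\<Sum>g\<in>(\<lambda>a. single_vec a Q) ` {..<k}. c g * g j)"
    unfolding block_generators_def
    by (rule sum.insert) (use const_vec_notin_single_vecs[OF \<open>k < n\<close>] in auto)
  also have "\<dots> = c (const_vec n 1) + (\<Sum>a<k. c (single_vec a Q) * single_vec a Q j)"
    using \<open>j < n\<close> by (simp add: sum.reindex[OF inj] const_vec_def)
  also have "(\<Sum>a<k. c (single_vec a Q) * single_vec a Q j) =
               (\<Sum>a<k. if j = a then c (single_vec a Q) * Q else 0)"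
    by (rule sum.cong) (auto simp: single_vec_def)
  finally show ?thesis by (simp add: sum.delta)
qed

lemma block_splines_subset_zm_span:
  assumes "0 < k" and "k < n"
  shows "cong_splines (P * Q) n (block_labeling k) \<subseteq> zm_span (P * Q) n (block_generators n k)"
proof
  fix f assume f: "f \<in> cong_splines (P * Q) n (block_labeling k)"
  let ?E = "\<lambda>a. single_vec a Q"
  define c where "c g = (if g = const_vec n 1 then f k else (f (inv_into {..<k} ?E g) - f k) div Q)"
    for g
  have c_const: "c (const_vec n 1) = f k" by (simp add: c_def)
  have c_single: "c (?E a) = (f a - f k) div Q" if "a < k" for a
  proof -
    have "?E a \<noteq> const_vec n 1"
      using that const_vec_notin_single_vecs[OF \<open>k < n\<close>] by (metis imageI lessThan_iff)
    moreover have "inj_on ?E {..<k}" using inj_on_single_vec Q_gt_1 by simp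
    ultimately show ?thesis using that by (simp add: c_def inv_into_f_f[of ?E])
  qed
  show "f \<in> zm_span (P * Q) n (block_generators n k)"
  proof (rule in_zm_spanI[where c = c])
    show "f \<in> zm_vectors (P * Q) n" using f by (rule cong_splinesD(1))
    fix j assume "j < n"
    have "(\<Sum>g\<in>block_generators n k. c g * g j) = f k + (if j < k then (f j - f k) div Q * Q else 0)"
      using \<open>k < n\<close> \<open>j < n\<close> by (simp add: sum_block_generators c_const c_single)
    also have "\<dots> = f j"
    proof (cases "j < k")
      case True
      then have "Q dvd f j - f k"
        using block_spline_cong[OF f True \<open>k < n\<close>] by (simp add: cong_iff_dvd_diff)
      then show ?thesis using True by simp
    next
      case False
      then show ?thesis using block_spline_eq[OF f \<open>0 < k\<close> _ \<open>j < n\<close>] by simp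
    qed
    finally show "[f j = (\<Sum>g\<in>block_generators n k. c g * g j)] (mod P * Q)" by simp
  qed
qed

lemma reduce_on_block_splines_onto:
  assumes "k < n"
  shows "{..k} \<rightarrow>\<^sub>E {0..<P} \<subseteq> reduce_on P {..k} ` cong_splines (P * Q) n (block_labeling k)"
proof
  fix t assume t: "t \<in> {..k} \<rightarrow>\<^sub>E {0..<P}"
  have "coprime Q P" using prime_P prime_Q P_neq_Q by (simp add: primes_coprime)
  then obtain u where u: "[Q * u = 1] (mod P)" using cong_solve_coprime_int by blast
  \<comment> \<open>Since \<open>Q * u = 1\<close> modulo P, \<open>f\<close> reduces to \<open>t\<close> modulo P but vanishes modulo Q.\<close>
  define f where "f j = (if j < n then (Q * u * t (min j k)) mod (P * Q) else 0)" for j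
  have f_Q: "[f j = 0] (mod Q)" for j
    by (simp add: f_def cong_0_iff dvd_mod_iff)
  have "f \<in> cong_splines (P * Q) n (block_labeling k)"
    unfolding cong_splines_def
  proof (intro CollectI conjI allI impI)
    show "f \<in> zm_vectors (P * Q) n"
      using zm_vectors_memI[of "P * Q"] P_less_PQ P_gt_1 by (simp add: f_def[abs_def])
    fix a b assume "a < n" "b < n" "a \<noteq> b"
    show "[f a = f b] (mod block_labeling k {a, b})"
    proof (cases "{a, b} \<subseteq> {k..}")
      case True
      then show ?thesis using \<open>a < n\<close> \<open>b < n\<close> by (simp add: f_def)
    next
      case False
      have "[f a = 0] (mod Q)" by (rule f_Q)
      also have "[0 = f b] (mod Q)" by (rule cong_sym, rule f_Q)
      finally show ?thesis using False by (auto simp: block_labeling_def)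
    qed
  qed
  moreover have "reduce_on P {..k} f = t"
  proof (rule reduce_on_eqI[OF t])
    fix a assume "a \<in> {..k}"
    then have "f a = (Q * u * t a) mod (P * Q)"
      using \<open>k < n\<close> by (simp add: f_def)
    also have "[(Q * u * t a) mod (P * Q) = Q * u * t a] (mod P)"
      by (rule cong_dvd_modulus[of _ _ "P * Q"]) (simp_all add: cong_def)
    also have "[Q * u * t a = 1 * t a] (mod P)"
      using u by (rule cong_scalar_right)
    finally show "[f a = t a] (mod P)" by simp
  qed
  ultimately show "t \<in> reduce_on P {..k} ` cong_splines (P * Q) n (block_labeling k)"
    by (metis image_eqI)
qed

lemma spline_rank_block_labeling:
  assumes "0 < k" and "k < n"
  shows "spline_rank (P * Q) n (principal_labeling (P * Q) (block_labeling k)) = Suc k"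
proof -
  have lab: "block_labeling k e \<in> {P, Q}" for e by (simp add: block_labeling_def)
  have "zm_span (P * Q) n (block_generators n k) = cong_splines (P * Q) n (block_labeling k)"
    using block_generators_subset block_splines_subset_zm_span assms P_gt_1 Q_gt_1
    by (intro antisym zm_span_subset_cong_splines) (auto simp: block_labeling_def)
  then have "spline_rank (P * Q) n (principal_labeling (P * Q) (block_labeling k)) =
               card (block_generators n k)"
    using assms block_generators_subset reduce_on_block_splines_onto card_block_generators P_gt_1
    by (intro spline_rank_eqI[where p = P and A = "{..k}"])
      (auto simp: splines_principal_labeling_P_Q[OF lab] block_generators_def)
  then show ?thesis using card_block_generators[OF \<open>k < n\<close>] by simp
qed

text \<open>The p-edges {1, 2} and {0, a} (a \<noteq> 1) and the q-edges {0, 1}, {1, a} (a \<ge> 3) and {2, 3}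
  each connect all vertices.\<close>

definition rigid_labeling :: "nat set \<Rightarrow> int" where
  "rigid_labeling e = (if e = {1, 2} \<or> (0 \<in> e \<and> 1 \<notin> e) then P else Q)"

lemma rigid_spline_eq:
  assumes f: "f \<in> cong_splines (P * Q) n rigid_labeling" and "4 \<le> n" and "a < n"
  shows "f a = f 0"
proof -
  have edge: "[f x = f y] (mod rigid_labeling {x, y})" if "x < n" "y < n" "x \<noteq> y" for x y
    using cong_splinesD(2)[OF f that] .
  have "[f a = f 0] (mod P)"
  proof (cases "a = 1")
    case True
    have "[f 1 = f 2] (mod P)" using edge[of 1 2] \<open>4 \<le> n\<close> by (simp add: rigid_labeling_def)
    also have "[f 2 = f 0] (mod P)" using edge[of 2 0] \<open>4 \<le> n\<close> by (simp add: rigid_labeling_def)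
    finally show ?thesis using True by simp
  next
    case False
    then show ?thesis using edge[of a 0] \<open>a < n\<close>
      by (cases "a = 0") (auto simp: rigid_labeling_def doubleton_eq_iff)
  qed
  moreover have "[f a = f 0] (mod Q)"
  proof -
    have Q10: "[f 1 = f 0] (mod Q)"
      using edge[of 1 0] \<open>4 \<le> n\<close> by (simp add: rigid_labeling_def doubleton_eq_iff)
    have Q1: "[f x = f 0] (mod Q)" if "3 \<le> x" "x < n" for x
    proof -
      have "[f x = f 1] (mod Q)"
        using edge[of x 1] that by (simp add: rigid_labeling_def doubleton_eq_iff)
      then show ?thesis using Q10 by (rule cong_trans)
    qed
    consider "a = 0" | "a = 1" | "a = 2" | "3 \<le> a" by linarith
    then show ?thesis
    proof cases
      case 3
      have "[f 2 = f 3] (mod Q)"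
        using edge[of 2 3] \<open>4 \<le> n\<close> by (simp add: rigid_labeling_def doubleton_eq_iff)
      also have "[f 3 = f 0] (mod Q)" using Q1 \<open>4 \<le> n\<close> by simp
      finally show ?thesis using 3 by simp
    qed (use Q10 Q1 \<open>a < n\<close> in auto)
  qed
  moreover have "f a \<in> {0..<P * Q}" and "f 0 \<in> {0..<P * Q}"
    using cong_splinesD(1)[OF f] assms by (auto simp: zm_vectors_def)
  ultimately show ?thesis using cong_P_Q_imp_eq by blast
qed

lemma rigid_splines_subset_zm_span:
  assumes "4 \<le> n"
  shows "cong_splines (P * Q) n rigid_labeling \<subseteq> zm_span (P * Q) n {const_vec n 1}"
proof
  fix f assume f: "f \<in> cong_splines (P * Q) n rigid_labeling"
  show "f \<in> zm_span (P * Q) n {const_vec n 1}"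
  proof (rule in_zm_spanI[where c = "\<lambda>_. f 0"])
    show "f \<in> zm_vectors (P * Q) n" using f by (rule cong_splinesD(1))
    show "[f j = (\<Sum>g\<in>{const_vec n 1}. f 0 * g j)] (mod P * Q)" if "j < n" for j
      using rigid_spline_eq[OF f assms that] that by (simp add: const_vec_def)
  qed
qed

lemma reduce_on_rigid_splines_onto:
  assumes "0 < n"
  shows "{0} \<rightarrow>\<^sub>E {0..<P} \<subseteq> reduce_on P {0} ` cong_splines (P * Q) n rigid_labeling"
proof
  fix t :: "nat \<Rightarrow> int" assume t: "t \<in> {0} \<rightarrow>\<^sub>E {0..<P}"
  have "0 \<le> t 0" and "t 0 < P" using PiE_mem[OF t, of 0] by simp_all
  then have "t 0 < P * Q" using P_less_PQ by linarith
  have "reduce_on P {0} (const_vec n (t 0)) = t"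
    by (rule reduce_on_eqI[OF t]) (use assms in \<open>simp add: const_vec_def\<close>)
  moreover have "const_vec n (t 0) \<in> cong_splines (P * Q) n rigid_labeling"
    using \<open>0 \<le> t 0\<close> \<open>t 0 < P * Q\<close> by (rule const_vec_in_cong_splines)
  ultimately show "t \<in> reduce_on P {0} ` cong_splines (P * Q) n rigid_labeling"
    by (rule image_eqI[OF sym])
qed

lemma spline_rank_rigid_labeling:
  assumes "4 \<le> n"
  shows "spline_rank (P * Q) n (principal_labeling (P * Q) rigid_labeling) = 1"
proof -
  have lab: "rigid_labeling e \<in> {P, Q}" for e by (simp add: rigid_labeling_def)
  have PQ: "0 < P * Q" "1 < P * Q" using P_gt_1 P_less_PQ by linarith+
  then have const: "{const_vec n 1} \<subseteq> cong_splines (P * Q) n rigid_labeling"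
    by (simp add: const_vec_in_cong_splines)
  have "zm_span (P * Q) n {const_vec n 1} = cong_splines (P * Q) n rigid_labeling"
    using const PQ rigid_splines_subset_zm_span[OF assms]
    by (intro antisym zm_span_subset_cong_splines) (auto simp: rigid_labeling_def)
  then have "spline_rank (P * Q) n (principal_labeling (P * Q) rigid_labeling) = card {const_vec n 1}"
    using const reduce_on_rigid_splines_onto assms P_gt_1
    by (intro spline_rank_eqI[where p = P and A = "{0}"]) (auto simp: splines_principal_labeling_P_Q[OF lab])
  then show ?thesis by simp
qed

lemma exists_edge_labeling_spline_rank:
  assumes "4 \<le> n" and "1 \<le> i" and "i \<le> n"
  shows "\<exists>\<alpha>. edge_labeling (P * Q) n \<alpha> \<and> spline_rank (P * Q) n \<alpha> = i"
proof -
  obtain lab where "\<And>e. lab e \<in> {P, Q}"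
    and rank: "spline_rank (P * Q) n (principal_labeling (P * Q) lab) = i"
  proof (cases "i = 1")
    case True
    then show ?thesis
      using that[of rigid_labeling] spline_rank_rigid_labeling[OF \<open>4 \<le> n\<close>]
      by (simp add: rigid_labeling_def)
  next
    case False
    then have "0 < i - 1" "i - 1 < n" "Suc (i - 1) = i" using assms by auto
    then show ?thesis
      using that[of "block_labeling (i - 1)"] spline_rank_block_labeling[of "i - 1" n]
      by (simp add: block_labeling_def)
  qed
  then show ?thesis using edge_labeling_principal_labeling_P_Q by blast
qed

end

theorem mainTheorem13:
  fixes p q n i :: nat
  assumes "prime p" and "prime q" and "p \<noteq> q"
    and "n \<ge> 4" and "1 \<le> i" and "i \<le> n"
  shows "\<exists>\<alpha>. edge_labeling (int (p * q)) n \<alpha> \<and> spline_rank (int (p * q)) n \<alpha> = i"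
proof -
  interpret two_primes "int p" "int q"
    using assms by unfold_locales auto
  show ?thesis
    using exists_edge_labeling_spline_rank[OF \<open>n \<ge> 4\<close> \<open>1 \<le> i\<close> \<open>i \<le> n\<close>] by simp
qed

end
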